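(* Let $d\ge 1$ and let $\Sigma: M_d(\mathbb{C})\to M_d(\mathbb{C})$ be a general dynamical map, i.e. a linear map that is trace preserving and hermiticity preserving ($\Sigma(\rho^\dagger)=\Sigma(\rho)^\dagger$ for all $\rho$), but not necessarily positivity preserving. Then $\Sigma$ can be written as the weighted difference of two completely positive trace-preserving (CPTP) maps: there exist a real number $p>0$ and CPTP maps $\Lambda^*_+,\Lambda^*_-$ on $M_d(\mathbb{C})$ such that $$\Sigma=(1+p)\,\Lambda^*_+-p\,\Lambda^*_-.$$ Explicitly: there exist finite families of matrices $\{K_j\}_j,\{M_j\}_j\subset M_d(\mathbb{C})$ with $\Sigma(\rho)=\sum_j K_j\rho K_j^\dagger-\sum_j M_j\rho M_j^\dagger$ for all $\rho$, and for any such families and any $p>0$ with $\sum_j M_j^\dagger M_j\le p\,\mathbb{I}$, setting $D=\sqrt{p\,\mathbb{I}-\sum_j M_j^\dagger M_j}$ (positive semidefinite square root) and $$\Lambda^*_+(\rho)=\frac{\sum_j K_j\rho K_j^\dagger+D\rho D^\dagger}{1+p},\qquad \Lambda^*_-(\rho)=\frac{\sum_j M_j\rho M_j^\dagger+D\rho D^\dagger}{p},$$ the maps $\Lambda^*_\pm$ are completely positive and trace preserving and $\Sigma=(1+p)\Lambda^*_+-p\Lambda^*_-$.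
   Context: $M_d(\mathbb{C})$ denotes the complex $d\times d$ matrices, $\mathbb{I}$ the identity matrix, and $A\le B$ means $B-A$ is positive semidefinite. A linear map $\Lambda$ on $M_d(\mathbb{C})$ is completely positive (CP) iff it has a Kraus form $\Lambda(\rho)=\sum_j K_j\rho K_j^\dagger$; it is trace preserving iff $\mathrm{tr}\,\Lambda(\rho)=\mathrm{tr}\,\rho$ for all $\rho$. *)

theory Defs
  imports "HOL-Analysis.Analysis"
begin

text \<open>Complex d x d matrices are modelled as complex^'d^'d for a finite type 'd
  (so d = CARD('d) >= 1 is arbitrary but fixed).\<close>

type_synonym 'd cmat = "complex^'d^'d"

definition cscale :: "complex \<Rightarrow> 'd::finite cmat \<Rightarrow> 'd::finite cmat" where
  "cscale c A = (\<chi> i j. c * A$i$j)"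

definition adj :: "'d::finite cmat \<Rightarrow> 'd::finite cmat" where
  "adj A = (\<chi> i j. cnj (A$j$i))"

definition cmat_linear :: "('d::finite cmat \<Rightarrow> 'd::finite cmat) \<Rightarrow> bool" where
  "cmat_linear f \<longleftrightarrow> (\<forall>A B. f (A + B) = f A + f B) \<and> (\<forall>c A. f (cscale c A) = cscale c (f A))"

definition trace_preserving :: "('d::finite cmat \<Rightarrow> 'd::finite cmat) \<Rightarrow> bool" where
  "trace_preserving f \<longleftrightarrow> (\<forall>\<rho>. trace (f \<rho>) = trace \<rho>)"

definition hermiticity_preserving :: "('d::finite cmat \<Rightarrow> 'd::finite cmat) \<Rightarrow> bool" where
  "hermiticity_preserving f \<longleftrightarrow> (\<forall>\<rho>. f (adj \<rho>) = adj (f \<rho>))"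

definition kraus :: "'d::finite cmat list \<Rightarrow> 'd::finite cmat \<Rightarrow> 'd::finite cmat" where
  "kraus Ks \<rho> = sum_list (map (\<lambda>K. K ** \<rho> ** adj K) Ks)"

definition completely_positive :: "('d::finite cmat \<Rightarrow> 'd::finite cmat) \<Rightarrow> bool" where
  "completely_positive f \<longleftrightarrow> (\<exists>Ks. \<forall>\<rho>. f \<rho> = kraus Ks \<rho>)"

definition CPTP :: "('d::finite cmat \<Rightarrow> 'd::finite cmat) \<Rightarrow> bool" where
  "CPTP f \<longleftrightarrow> completely_positive f \<and> trace_preserving f"

definition psd :: "'d::finite cmat \<Rightarrow> bool" where
  "psd A \<longleftrightarrow> (\<forall>x::complex^'d. let q = (\<Sum>i\<in>UNIV. cnj (x$i) * (A *v x)$i) in Im q = 0 \<and> Re q \<ge> 0)"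

definition loewner_le :: "'d::finite cmat \<Rightarrow> 'd::finite cmat \<Rightarrow> bool" where
  "loewner_le A B \<longleftrightarrow> psd (B - A)"

definition psd_sqrt :: "'d::finite cmat \<Rightarrow> 'd::finite cmat" where
  "psd_sqrt A = (THE D. psd D \<and> D ** D = A)"

end

theory Submission
  imports Defs
begin

text \<open>
  In the basis of matrix units, a linear map on \<open>M\<^sub>d(\<complex>)\<close> reads
  \<open>\<Sigma>(\<rho>) = \<Sum> c\<^sub>i\<^sub>j\<^sub>k\<^sub>l E\<^sub>i\<^sub>j \<rho> E\<^sub>k\<^sub>l\<^sup>\<dagger>\<close>. If \<open>\<Sigma>\<close> preserves hermiticity, then
  \<open>2\<Sigma>(\<rho>) = \<Sigma>(\<rho>) + \<Sigma>(\<rho>\<^sup>\<dagger>)\<^sup>\<dagger>\<close> is a sum of terms \<open>c B\<rho>A\<^sup>\<dagger> + c\<^sup>* A\<rho>B\<^sup>\<dagger>\<close>, each of which is a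
  difference of Kraus terms by polarisation; so \<open>\<Sigma> = K - M\<close> for two Kraus maps.
  For any such decomposition, trace preservation forces \<open>\<Sum> K\<^sub>j\<^sup>\<dagger>K\<^sub>j = I + \<Sum> M\<^sub>j\<^sup>\<dagger>M\<^sub>j\<close>.
  Adjoining the Kraus operator \<open>D = (p I - \<Sum> M\<^sub>j\<^sup>\<dagger>M\<^sub>j)\<^sup>1\<^sup>/\<^sup>2\<close> to both families makes
  these sums \<open>(1 + p) I\<close> and \<open>p I\<close>, so after normalisation both maps are CPTP, and \<open>D\<close>
  cancels in the difference.

  The square root is built from the spectral theorem for self-adjoint operators on the
  real inner product space underlying \<open>\<complex>\<^sup>d\<close>; it is complex linear because conjugating it
  by multiplication with \<open>\<i>\<close> yields another positive square root, and positive square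
  roots are unique.
\<close>

section \<open>Square roots of positive operators\<close>

definition self_adjoint :: "('a::real_inner \<Rightarrow> 'a) \<Rightarrow> bool" where
  "self_adjoint f \<longleftrightarrow> linear f \<and> (\<forall>x y. inner (f x) y = inner x (f y))"

definition positive_operator :: "('a::real_inner \<Rightarrow> 'a) \<Rightarrow> bool" where
  "positive_operator f \<longleftrightarrow> self_adjoint f \<and> (\<forall>x. 0 \<le> inner x (f x))"

lemma quadratic_nonneg_imp_linear_coeff_zero:
  fixes a c :: real
  assumes nonneg: "\<And>t. 0 \<le> 2 * t * a + t * t * c"
  shows "a = 0"
proof (rule ccontr)
  assume "a \<noteq> 0"
  define e where "e = \<bar>c\<bar> + 1"
  have "e > 0" by (simp add: e_def add_nonneg_pos)
  have "2 * (- a / e) * a + (- a / e) * (- a / e) * c = (a * a) * (c - 2 * e) / (e * e)"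
    using \<open>e > 0\<close> by (simp add: field_simps)
  also have "\<dots> < 0"
    using \<open>a \<noteq> 0\<close> \<open>e > 0\<close> by (intro divide_neg_pos mult_pos_neg) (auto simp: e_def zero_less_mult_iff)
  finally show False using nonneg[of "- a / e"] by linarith
qed

lemma self_adjoint_nonneg_form_zero_imp_zero:
  assumes "self_adjoint g" "subspace S" "g ` S \<subseteq> S" "\<forall>x\<in>S. 0 \<le> inner x (g x)"
    and "v \<in> S" "inner v (g v) = 0"
  shows "g v = 0"
proof -
  have lin: "linear g" and sym: "\<And>x y. inner (g x) y = inner x (g y)"
    using assms(1) by (auto simp: self_adjoint_def)
  define w where "w = g v"
  have "w \<in> S" using assms(3,5) w_def by auto
  have "0 \<le> 2 * t * inner w w + t * t * inner w (g w)" for t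
  proof -
    have "v + t *\<^sub>R w \<in> S" using assms(2,5) \<open>w \<in> S\<close> by (simp add: subspace_add subspace_scale)
    then have "0 \<le> inner (v + t *\<^sub>R w) (g (v + t *\<^sub>R w))" using assms(4) by auto
    also have "\<dots> = inner v (g v) + t * inner v (g w) + t * inner w (g v) + t * t * inner w (g w)"
      by (simp add: linear_add[OF lin] linear_cmul[OF lin] inner_add_left inner_add_right algebra_simps)
    also have "inner v (g w) = inner w (g v)" by (metis sym inner_commute)
    finally show ?thesis using assms(6) by (simp add: w_def algebra_simps)
  qed
  then have "inner w w = 0" by (rule quadratic_nonneg_imp_linear_coeff_zero)
  then show ?thesis by (simp add: w_def)
qed

lemma quadratic_form_attains_max_on_unit_sphere:
  fixes f :: "'a::euclidean_space \<Rightarrow> 'a"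
  assumes "linear f" "subspace S" "S \<noteq> {0}"
  shows "\<exists>v\<in>S. norm v = 1 \<and> (\<forall>y\<in>S. norm y = 1 \<longrightarrow> inner y (f y) \<le> inner v (f v))"
proof -
  define K where "K = S \<inter> sphere 0 1"
  have "compact K" unfolding K_def using closed_subspace[OF assms(2)] by (simp add: closed_Int_compact)
  moreover obtain x where "x \<in> S" "x \<noteq> 0" using assms(2,3) subspace_0 by blast
  then have "inverse (norm x) *\<^sub>R x \<in> K" using assms(2) by (simp add: K_def subspace_scale)
  then have "K \<noteq> {}" by blast
  moreover have "continuous_on K f"
    using assms(1) linear_conv_bounded_linear linear_continuous_on by blast
  then have "continuous_on K (\<lambda>x. inner x (f x))" by (intro continuous_intros)
  ultimately obtain v where "v \<in> K" "\<And>y. y \<in> K \<Longrightarrow> inner y (f y) \<le> inner v (f v)"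
    using continuous_attains_sup[of K "\<lambda>x. inner x (f x)"] by auto
  then show ?thesis by (auto simp: K_def)
qed

lemma self_adjoint_eigenvector_in_subspace:
  fixes f :: "'a::euclidean_space \<Rightarrow> 'a"
  assumes "self_adjoint f" "subspace S" "f ` S \<subseteq> S" "S \<noteq> {0}"
  shows "\<exists>v\<in>S. norm v = 1 \<and> (\<exists>\<mu>. f v = \<mu> *\<^sub>R v)"
proof -
  have lin: "linear f" and sym: "\<And>x y. inner (f x) y = inner x (f y)"
    using assms(1) by (auto simp: self_adjoint_def)
  obtain v where "v \<in> S" "norm v = 1"
    and v_max: "\<And>y. y \<in> S \<Longrightarrow> norm y = 1 \<Longrightarrow> inner y (f y) \<le> inner v (f v)"
    using quadratic_form_attains_max_on_unit_sphere[OF lin assms(2,4)] by blast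
  define l where "l = inner v (f v)"
  define g where "g = (\<lambda>x. l *\<^sub>R x - f x)"
  \<comment> \<open>\<open>l\<close> is the maximum of the Rayleigh quotient, so \<open>l - f\<close> is nonnegative on \<open>S\<close> and vanishes at \<open>v\<close>.\<close>
  have "linear g"
    by (rule linearI) (simp_all add: g_def linear_add[OF lin] linear_cmul[OF lin] algebra_simps)
  then have "self_adjoint g"
    using sym by (simp add: self_adjoint_def g_def inner_diff_left inner_diff_right)
  moreover have "g ` S \<subseteq> S"
    using assms(2,3) unfolding g_def using subspace_diff subspace_scale by blast
  moreover have "0 \<le> inner x (g x)" if "x \<in> S" for x
  proof (cases "x = 0")
    case True
    then show ?thesis by (simp add: g_def linear_0[OF lin])
  next
    case False
    define u where "u = inverse (norm x) *\<^sub>R x"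
    have le: "inner u (f u) \<le> l" and unit: "inner u u = 1"
      using v_max[of u] that False assms(2) by (auto simp: u_def l_def subspace_scale dot_square_norm)
    have x_eq: "x = norm x *\<^sub>R u" using False by (simp add: u_def)
    have "inner x (g x) = (norm x)\<^sup>2 * (l * inner u u - inner u (f u))"
      by (subst (1 2) x_eq)
        (simp add: g_def linear_cmul[OF lin] inner_diff_right power2_eq_square algebra_simps)
    then show ?thesis using le unit by simp
  qed
  moreover have "inner v (g v) = 0"
    using \<open>norm v = 1\<close> by (simp add: g_def l_def inner_diff_right dot_square_norm)
  ultimately have "g v = 0"
    using self_adjoint_nonneg_form_zero_imp_zero assms(2) \<open>v \<in> S\<close> by blast
  then have "f v = l *\<^sub>R v" by (simp add: g_def)
  then show ?thesis using \<open>v \<in> S\<close> \<open>norm v = 1\<close> by blast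
qed

definition orthonormal_eigenbasis :: "('a::real_inner \<Rightarrow> 'a) \<Rightarrow> 'a set \<Rightarrow> 'a set \<Rightarrow> bool" where
  "orthonormal_eigenbasis f S B \<longleftrightarrow> finite B \<and> B \<subseteq> S
     \<and> (\<forall>b\<in>B. norm b = 1 \<and> (\<exists>\<mu>. f b = \<mu> *\<^sub>R b))
     \<and> (\<forall>b\<in>B. \<forall>c\<in>B. b \<noteq> c \<longrightarrow> inner b c = 0)
     \<and> (\<forall>x\<in>S. (\<Sum>b\<in>B. inner b x *\<^sub>R b) = x)"

lemma orthonormal_eigenbasis_insert:
  assumes B: "orthonormal_eigenbasis f (S \<inter> {x. inner v x = 0}) B"
    and "subspace S" "v \<in> S" "norm v = 1" "f v = \<mu> *\<^sub>R v"
  shows "orthonormal_eigenbasis f S (insert v B)"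
proof -
  have "finite B" and B_sub: "B \<subseteq> S \<inter> {x. inner v x = 0}"
    and B_eig: "\<forall>b\<in>B. norm b = 1 \<and> (\<exists>\<mu>. f b = \<mu> *\<^sub>R b)"
    and B_orth: "\<forall>b\<in>B. \<forall>c\<in>B. b \<noteq> c \<longrightarrow> inner b c = 0"
    and B_span: "\<forall>x\<in>S \<inter> {x. inner v x = 0}. (\<Sum>b\<in>B. inner b x *\<^sub>R b) = x"
    using B by (simp_all add: orthonormal_eigenbasis_def)
  have vv: "inner v v = 1" using \<open>norm v = 1\<close> by (simp add: dot_square_norm)
  then have "v \<notin> B" using B_sub by auto
  have "(\<Sum>b\<in>insert v B. inner b x *\<^sub>R b) = x" if "x \<in> S" for x
  proof -
    define y where "y = x - inner v x *\<^sub>R v"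
    have "y \<in> S \<inter> {x. inner v x = 0}" using that assms(2,3) vv
      by (auto simp: y_def inner_diff_right subspace_diff subspace_scale)
    then have "y = (\<Sum>b\<in>B. inner b y *\<^sub>R b)" using B_span by simp
    also have "\<dots> = (\<Sum>b\<in>B. inner b x *\<^sub>R b)"
      using B_sub by (intro sum.cong) (auto simp: y_def inner_diff_right inner_commute)
    finally show ?thesis using \<open>finite B\<close> \<open>v \<notin> B\<close> by (simp add: y_def algebra_simps)
  qed
  moreover have "\<forall>b\<in>insert v B. norm b = 1 \<and> (\<exists>\<mu>. f b = \<mu> *\<^sub>R b)"
    using B_eig assms(4,5) by auto
  moreover have "\<forall>b\<in>insert v B. \<forall>c\<in>insert v B. b \<noteq> c \<longrightarrow> inner b c = 0"
    using B_sub B_orth by (auto simp: inner_commute)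
  ultimately show ?thesis
    using \<open>finite B\<close> B_sub assms(3) by (simp add: orthonormal_eigenbasis_def)
qed

lemma self_adjoint_orthonormal_eigenbasis:
  fixes f :: "'a::euclidean_space \<Rightarrow> 'a"
  assumes "self_adjoint f" "subspace S" "f ` S \<subseteq> S"
  shows "\<exists>B. orthonormal_eigenbasis f S B"
  using assms(2,3)
proof (induction "dim S" arbitrary: S rule: less_induct)
  case less
  show ?case
  proof (cases "S = {0}")
    case True
    then show ?thesis by (auto simp: orthonormal_eigenbasis_def)
  next
    case False
    obtain v \<mu> where "v \<in> S" "norm v = 1" and fv: "f v = \<mu> *\<^sub>R v"
      using self_adjoint_eigenvector_in_subspace[OF assms(1) less.prems False] by blast
    define S' where "S' = S \<inter> {x. inner v x = 0}"
    have "subspace S'"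
      unfolding S'_def using less.prems(1) subspace_hyperplane[of v] by (rule subspace_inter)
    have "f ` S' \<subseteq> S'"
    proof
      fix y assume "y \<in> f ` S'"
      then obtain x where x: "x \<in> S" "inner v x = 0" "y = f x" by (auto simp: S'_def)
      have "inner v (f x) = inner (f v) x" using assms(1) by (simp add: self_adjoint_def)
      also have "\<dots> = 0" using x fv by (metis inner_scaleR_left mult_zero_right)
      finally show "y \<in> S'" using x less.prems(2) by (auto simp: S'_def)
    qed
    moreover have "v \<notin> S'" using \<open>norm v = 1\<close> by (simp add: S'_def dot_square_norm)
    then have "S' \<subset> S" using \<open>v \<in> S\<close> unfolding S'_def by blast
    then have "dim S' < dim S"
      using dim_psubset \<open>subspace S'\<close> less.prems(1) by (metis span_eq_iff)
    ultimately obtain B where "orthonormal_eigenbasis f S' B"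
      using less.hyps \<open>subspace S'\<close> by blast
    then have "orthonormal_eigenbasis f S (insert v B)"
      unfolding S'_def
      by (rule orthonormal_eigenbasis_insert[where f = f and \<mu> = \<mu>, OF _ less.prems(1) \<open>v \<in> S\<close> \<open>norm v = 1\<close> fv])
    then show ?thesis by blast
  qed
qed

lemma orthonormal_eigenbasis_inner_sum:
  assumes "orthonormal_eigenbasis f S B" "c \<in> B"
  shows "inner c (\<Sum>b\<in>B. a b *\<^sub>R b) = a c"
proof -
  have "inner c (\<Sum>b\<in>B. a b *\<^sub>R b) = (\<Sum>b\<in>B. a b * inner c b)"
    by (simp add: inner_sum_right)
  also have "\<dots> = (\<Sum>b\<in>B. if b = c then a c else 0)"
    using assms by (intro sum.cong refl) (auto simp: orthonormal_eigenbasis_def dot_square_norm)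
  also have "\<dots> = a c" using assms by (simp add: orthonormal_eigenbasis_def)
  finally show ?thesis .
qed

lemma orthonormal_eigenbasis_eigenvalue:
  assumes "orthonormal_eigenbasis f S B" "b \<in> B"
  shows "f b = inner b (f b) *\<^sub>R b"
proof -
  have "norm b = 1" "\<exists>\<mu>. f b = \<mu> *\<^sub>R b"
    using assms by (simp_all add: orthonormal_eigenbasis_def)
  then show ?thesis by (auto simp: dot_square_norm)
qed

lemma orthonormal_eigenbasis_apply:
  assumes "orthonormal_eigenbasis f UNIV B" "linear f"
  shows "f x = (\<Sum>b\<in>B. (inner b (f b) * inner b x) *\<^sub>R b)"
proof -
  have "f x = f (\<Sum>b\<in>B. inner b x *\<^sub>R b)" using assms(1) by (simp add: orthonormal_eigenbasis_def)
  also have "\<dots> = (\<Sum>b\<in>B. inner b x *\<^sub>R f b)"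
    by (simp add: linear_sum[OF assms(2)] linear_cmul[OF assms(2)])
  also have "\<dots> = (\<Sum>b\<in>B. (inner b (f b) * inner b x) *\<^sub>R b)"
  proof (intro sum.cong refl)
    fix b assume "b \<in> B"
    then have "f b = inner b (f b) *\<^sub>R b" by (rule orthonormal_eigenbasis_eigenvalue[OF assms(1)])
    then have "inner b x *\<^sub>R f b = inner b x *\<^sub>R (inner b (f b) *\<^sub>R b)" by (rule arg_cong)
    then show "inner b x *\<^sub>R f b = (inner b (f b) * inner b x) *\<^sub>R b" by (simp add: ac_simps)
  qed
  finally show ?thesis .
qed

lemma positive_operator_sqrt_exists:
  fixes f :: "'a::euclidean_space \<Rightarrow> 'a"
  assumes "positive_operator f"
  shows "\<exists>r. positive_operator r \<and> r \<circ> r = f"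
proof -
  have "self_adjoint f" and lin: "linear f" and f_nonneg: "\<And>x. 0 \<le> inner x (f x)"
    using assms by (auto simp: positive_operator_def self_adjoint_def)
  then obtain B where B: "orthonormal_eigenbasis f UNIV B"
    using self_adjoint_orthonormal_eigenbasis subspace_UNIV by blast
  define s where "s b = sqrt (inner b (f b))" for b
  define r where "r x = (\<Sum>b\<in>B. (s b * inner b x) *\<^sub>R b)" for x
  have r_inner: "inner (r x) y = (\<Sum>b\<in>B. s b * inner b x * inner b y)" for x y
    by (simp add: r_def inner_sum_left)
  have "linear r"
    by (rule linearI) (simp_all add: r_def inner_add_right distrib_left scaleR_add_left
        sum.distrib scaleR_sum_right mult_ac)
  moreover have "inner (r x) y = inner x (r y)" for x y
    by (subst inner_commute[of x]) (simp add: r_inner mult_ac)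
  moreover have "0 \<le> inner x (r x)" for x
  proof -
    have "inner x (r x) = (\<Sum>b\<in>B. s b * (inner b x * inner b x))"
      by (subst inner_commute) (simp add: r_inner mult_ac)
    also have "\<dots> \<ge> 0"
      unfolding s_def by (intro sum_nonneg mult_nonneg_nonneg[OF real_sqrt_ge_zero[OF f_nonneg] zero_le_square])
    finally show ?thesis .
  qed
  ultimately have "positive_operator r" by (simp add: positive_operator_def self_adjoint_def)
  moreover have "r (r x) = f x" for x
  proof -
    have "r (r x) = (\<Sum>b\<in>B. (s b * (s b * inner b x)) *\<^sub>R b)"
      unfolding r_def[of "r x"] using B
      by (intro sum.cong refl) (simp add: r_def orthonormal_eigenbasis_inner_sum)
    also have "\<dots> = (\<Sum>b\<in>B. (inner b (f b) * inner b x) *\<^sub>R b)"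
      using f_nonneg by (simp add: s_def mult.assoc[symmetric])
    also have "\<dots> = f x"
      by (rule orthonormal_eigenbasis_apply[OF B lin, symmetric])
    finally show ?thesis .
  qed
  ultimately show ?thesis by (auto simp: fun_eq_iff)
qed

lemma positive_operators_with_equal_squares_agree_on_eigenvector:
  assumes pos: "positive_operator r1" "positive_operator r2" and sq: "r1 \<circ> r1 = r2 \<circ> r2"
    and eig: "r1 b - r2 b = \<mu> *\<^sub>R b"
  shows "r1 b = r2 b"
proof (cases "\<mu> = 0")
  case True
  then show ?thesis using eig by simp
next
  case False
  have sa: "self_adjoint r1" "self_adjoint r2"
    and n1: "\<And>x. 0 \<le> inner x (r1 x)" and n2: "\<And>x. 0 \<le> inner x (r2 x)"
    using pos by (simp_all add: positive_operator_def)
  then have s1: "\<And>x y. inner (r1 x) y = inner x (r1 y)" and s2: "\<And>x y. inner (r2 x) y = inner x (r2 y)"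
    by (simp_all add: self_adjoint_def)
  \<comment> \<open>\<open>|r1 b|\<^sup>2 = |r2 b|\<^sup>2\<close> gives \<open>\<mu> (\<langle>b, r1 b\<rangle> + \<langle>b, r2 b\<rangle>) = 0\<close>, so both forms vanish at \<open>b\<close>.\<close>
  have "inner (r1 b) (r1 b) = inner b (r1 (r1 b))" by (rule s1)
  also have "\<dots> = inner b (r2 (r2 b))" using fun_cong[OF sq, of b] by simp
  also have "\<dots> = inner (r2 b) (r2 b)" by (rule s2[symmetric])
  finally have norms: "inner (r1 b) (r1 b) = inner (r2 b) (r2 b)" .
  have "\<mu> * (inner b (r1 b) + inner b (r2 b)) = inner (\<mu> *\<^sub>R b) (r1 b + r2 b)"
    by (simp add: inner_add_right distrib_left)
  also have "\<dots> = inner (r1 b - r2 b) (r1 b + r2 b)" by (simp only: eig)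
  also have "\<dots> = 0"
    using norms inner_commute[of "r1 b" "r2 b"] by (simp add: inner_diff_left inner_add_right)
  finally have "inner b (r1 b) = 0" "inner b (r2 b) = 0"
    using False n1[of b] n2[of b] by (auto simp: add_nonneg_eq_0_iff)
  then have "r1 b = 0" "r2 b = 0"
    using sa n1 n2 by (auto intro: self_adjoint_nonneg_form_zero_imp_zero[OF _ subspace_UNIV])
  then show ?thesis by simp
qed

lemma positive_operator_sqrt_unique:
  fixes r1 r2 :: "'a::euclidean_space \<Rightarrow> 'a"
  assumes pos: "positive_operator r1" "positive_operator r2" and sq: "r1 \<circ> r1 = r2 \<circ> r2"
  shows "r1 = r2"
proof -
  have l1: "linear r1" and s1: "\<And>x y. inner (r1 x) y = inner x (r1 y)"
    and l2: "linear r2" and s2: "\<And>x y. inner (r2 x) y = inner x (r2 y)"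
    using pos by (auto simp: positive_operator_def self_adjoint_def)
  define X where "X x = r1 x - r2 x" for x
  have "linear X" unfolding X_def
    by (rule linearI) (simp_all add: linear_add[OF l1] linear_add[OF l2]
        linear_cmul[OF l1] linear_cmul[OF l2] algebra_simps)
  then have "self_adjoint X"
    using s1 s2 by (simp add: self_adjoint_def X_def inner_diff_left inner_diff_right)
  then obtain B where B: "orthonormal_eigenbasis X UNIV B"
    using self_adjoint_orthonormal_eigenbasis subspace_UNIV by blast
  have X_basis: "X b = 0" if "b \<in> B" for b
  proof -
    have "\<exists>\<mu>. r1 b - r2 b = \<mu> *\<^sub>R b"
      using B that by (simp add: orthonormal_eigenbasis_def X_def)
    then obtain \<mu> where "r1 b - r2 b = \<mu> *\<^sub>R b" ..
    then have "r1 b = r2 b"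
      by (rule positive_operators_with_equal_squares_agree_on_eigenvector[OF pos sq])
    then show ?thesis by (simp add: X_def)
  qed
  then have "X x = 0" for x
    by (subst orthonormal_eigenbasis_apply[OF B \<open>linear X\<close>]) simp
  then show ?thesis by (auto simp: X_def fun_eq_iff)
qed

section \<open>Complex matrices\<close>

lemma matrix_add_rdistrib: "((A::'a::semiring_1^'n^'m) + B) ** C = A ** C + B ** C"
  by (simp add: matrix_matrix_mult_def vec_eq_iff sum.distrib distrib_right)

lemma scaleR_matrix_vector_mult: "((k::real) *\<^sub>R (A::'a::real_algebra_1^'n^'m)) *v x = k *\<^sub>R (A *v x)"
  by (simp add: vec_eq_iff matrix_vector_mult_def scaleR_sum_right)

lemma adj_mult: "adj (A ** B) = adj B ** adj A"
  by (simp add: adj_def matrix_matrix_mult_def vec_eq_iff mult.commute)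

lemma adj_add: "adj (A + B) = adj A + adj B"
  by (simp add: adj_def vec_eq_iff)

lemma adj_diff: "adj (A - B) = adj A - adj B"
  by (simp add: adj_def vec_eq_iff)

lemma adj_scaleR: "adj (c *\<^sub>R A) = c *\<^sub>R adj A"
  by (simp add: adj_def vec_eq_iff)

lemma adj_cscale: "adj (cscale c A) = cscale (cnj c) (adj A)"
  by (simp add: adj_def cscale_def vec_eq_iff)

lemma adj_sum: "adj (sum f S) = (\<Sum>s\<in>S. adj (f s))"
  by (simp add: adj_def vec_eq_iff)

lemma adj_zero [simp]: "adj 0 = 0"
  by (simp add: adj_def vec_eq_iff)

lemma adj_mat_one [simp]: "adj (mat 1) = mat 1"
  by (simp add: adj_def mat_def vec_eq_iff)

lemma adj_adj [simp]: "adj (adj A) = A"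
  by (simp add: adj_def vec_eq_iff)

lemma cscale_nth [simp]: "cscale c A $ i $ j = c * A$i$j"
  by (simp add: cscale_def)

lemma cscale_cscale: "cscale c (cscale d A) = cscale (c * d) A"
  by (simp add: vec_eq_iff mult.assoc)

lemma cscale_add: "cscale c (A + B) = cscale c A + cscale c B"
  by (simp add: vec_eq_iff distrib_left)

lemma cscale_mult_left: "cscale c A ** B = cscale c (A ** B)"
  by (simp add: vec_eq_iff matrix_matrix_mult_def sum_distrib_left mult.assoc)

lemma cscale_mult_right: "A ** cscale c B = cscale c (A ** B)"
  by (simp add: vec_eq_iff matrix_matrix_mult_def sum_distrib_left mult_ac)

definition matrix_unit :: "'d::finite \<Rightarrow> 'd \<Rightarrow> 'd cmat" where
  "matrix_unit i j = (\<chi> a b. if a = i then if b = j then 1 else 0 else 0)"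

lemma matrix_unit_nth: "matrix_unit i j $ a $ b = (if a = i then if b = j then 1 else 0 else 0)"
  by (simp add: matrix_unit_def)

lemma matrix_unit_mult_nth: "(matrix_unit i j ** A) $ a $ b = (if a = i then A$j$b else 0)"
proof -
  have "matrix_unit i j $ a $ k * A$k$b = (if a = i then if k = j then A$j$b else 0 else 0)" for k
    by (simp add: matrix_unit_nth)
  then show ?thesis by (simp add: matrix_matrix_mult_def)
qed

lemma mult_matrix_unit_nth: "(A ** matrix_unit i j) $ a $ b = (if b = j then A$a$i else 0)"
proof -
  have "A$a$k * matrix_unit i j $ k $ b = (if b = j then if k = i then A$a$i else 0 else 0)" for k
    by (simp add: matrix_unit_nth)
  then show ?thesis by (simp add: matrix_matrix_mult_def)
qed

lemma adj_matrix_unit: "adj (matrix_unit i j) = matrix_unit j i"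
  by (simp add: adj_def matrix_unit_def vec_eq_iff)

lemma matrix_unit_sandwich: "matrix_unit i j ** \<rho> ** adj (matrix_unit k l) = cscale (\<rho>$j$l) (matrix_unit i k)"
  by (simp add: vec_eq_iff adj_matrix_unit mult_matrix_unit_nth matrix_unit_mult_nth cscale_def matrix_unit_nth)

lemma matrix_unit_expansion: "A = (\<Sum>j\<in>UNIV. \<Sum>l\<in>UNIV. cscale (A$j$l) (matrix_unit j l))"
proof -
  have "(\<Sum>l\<in>UNIV. cscale (A$j$l) (matrix_unit j l)) $ a $ b = (if a = j then A$j$b else 0)" for j a b
  proof -
    have "A$j$l * matrix_unit j l $ a $ b = (if a = j then if l = b then A$j$b else 0 else 0)" for l
      by (auto simp: matrix_unit_nth)
    then show ?thesis by (simp add: sum_component cscale_def)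
  qed
  then show ?thesis by (simp add: vec_eq_iff sum_component)
qed

lemma trace_scaleR: "trace (c *\<^sub>R (A::'a::real_algebra_1^'n^'n)) = c *\<^sub>R trace A"
  by (simp add: trace_def scaleR_sum_right)

lemma trace_mult_matrix_unit: "trace (A ** matrix_unit j i) = A$i$j"
  by (simp add: trace_def mult_matrix_unit_nth)

lemma matrix_eq_by_trace:
  assumes "\<And>\<rho>. trace ((A::'d::finite cmat) ** \<rho>) = trace (B ** \<rho>)"
  shows "A = B"
  using assms[of "matrix_unit _ _"] by (simp add: vec_eq_iff trace_mult_matrix_unit)

section \<open>Positive semidefinite matrices\<close>

lemma inner_vec_complex: "inner (x::complex^'n) y = Re (\<Sum>i\<in>UNIV. cnj (x$i) * y$i)"
  by (simp add: inner_vec_def inner_complex_def)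

lemma inner_imag_unit_left: "inner (\<i> *s x) (y::complex^'n) = - inner x (\<i> *s y)"
  by (simp add: inner_vec_def inner_complex_def sum_negf[symmetric])

lemma vector_smult_scaleR: "c *s (a *\<^sub>R x) = a *\<^sub>R (c *s (x::'a::real_algebra^'n))"
  by (simp add: vec_eq_iff)

lemma linear_matrix_vector_mult: "linear (\<lambda>x. (A::'a::real_algebra_1^'n^'m) *v x)"
  by (rule linearI) (simp_all add: vec_eq_iff matrix_vector_mult_def sum.distrib ring_distribs
      scaleR_sum_right mult_scaleR_right)

lemma psd_iff_quadratic_form:
  "psd (A::'d::finite cmat) \<longleftrightarrow> (\<forall>x. inner (\<i> *s x) (A *v x) = 0 \<and> 0 \<le> inner x (A *v x))"
proof -
  have "Re (\<Sum>i\<in>UNIV. cnj (x$i) * (A *v x)$i) = inner x (A *v x)"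
    and "Im (\<Sum>i\<in>UNIV. cnj (x$i) * (A *v x)$i) = inner (\<i> *s x) (A *v x)" for x
    by (simp_all add: inner_vec_def inner_complex_def)
  then show ?thesis by (simp add: psd_def Let_def)
qed

lemma hermitian_imp_self_adjoint:
  assumes "adj (A::'d::finite cmat) = A"
  shows "self_adjoint (\<lambda>x. A *v x)"
proof -
  have A_entry: "A$j$i = cnj (A$i$j)" for i j
    using assms by (metis adj_def vec_lambda_beta)
  have "inner (A *v x) y = inner x (A *v y)" for x y
  proof -
    have "(\<Sum>i\<in>UNIV. cnj ((A *v x)$i) * y$i) = (\<Sum>i\<in>UNIV. \<Sum>j\<in>UNIV. cnj (x$j) * (cnj (A$i$j) * y$i))"
      by (simp add: matrix_vector_mult_def sum_distrib_right sum_distrib_left mult_ac)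
    also have "\<dots> = (\<Sum>i\<in>UNIV. \<Sum>j\<in>UNIV. cnj (x$j) * (A$j$i * y$i))"
      by (simp only: A_entry[symmetric])
    also have "\<dots> = (\<Sum>j\<in>UNIV. cnj (x$j) * (A *v y)$j)"
      by (subst sum.swap) (simp add: matrix_vector_mult_def sum_distrib_left)
    finally show ?thesis by (simp add: inner_vec_complex)
  qed
  then show ?thesis using linear_matrix_vector_mult by (simp add: self_adjoint_def)
qed

lemma self_adjoint_imp_hermitian:
  assumes "self_adjoint (\<lambda>x. (A::'d::finite cmat) *v x)"
  shows "adj A = A"
proof -
  have sym: "\<And>x y. inner (A *v x) y = inner x (A *v y)" using assms by (auto simp: self_adjoint_def)
  have mult_axis: "(A *v axis j c) $ k = A$k$j * c" for j k c
    by (simp add: matrix_vector_mult_def axis_def if_distrib cong: if_cong)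
  have "cnj (A$j$i) = A$i$j" for i j
  proof -
    have "Re (A$i$j) = Re (A$j$i)"
      using sym[of "axis j 1" "axis i 1"] by (simp add: inner_axis inner_axis' mult_axis inner_complex_def)
    moreover have "Im (A$i$j) = - Im (A$j$i)"
      using sym[of "axis j 1" "axis i \<i>"] by (simp add: inner_axis inner_axis' mult_axis inner_complex_def)
    ultimately show ?thesis by (simp add: complex_eq_iff)
  qed
  then show ?thesis by (simp add: adj_def vec_eq_iff)
qed

lemma self_adjoint_imag_form_zero:
  assumes "self_adjoint (\<lambda>x. (A::'d::finite cmat) *v x)"
  shows "inner (\<i> *s x) (A *v x) = 0"
proof -
  have sym: "\<And>x y. inner (A *v x) y = inner x (A *v y)" using assms by (auto simp: self_adjoint_def)
  have "inner (\<i> *s x) (A *v x) = inner (\<i> *s (A *v x)) x"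
    by (simp add: sym vector_scalar_commute[symmetric])
  also have "\<dots> = - inner (A *v x) (\<i> *s x)"
    by (rule inner_imag_unit_left)
  also have "\<dots> = - inner (\<i> *s x) (A *v x)"
    by (simp add: inner_commute)
  finally show ?thesis by simp
qed

lemma psd_iff_positive_operator: "psd (A::'d::finite cmat) \<longleftrightarrow> positive_operator (\<lambda>x. A *v x)"
proof
  assume "positive_operator (\<lambda>x. A *v x)"
  then show "psd A"
    using self_adjoint_imag_form_zero by (auto simp: psd_iff_quadratic_form positive_operator_def)
next
  assume "psd A"
  then have im_zero: "\<And>x. inner (\<i> *s x) (A *v x) = 0" and nonneg: "\<And>x. 0 \<le> inner x (A *v x)"
    by (auto simp: psd_iff_quadratic_form)
  \<comment> \<open>Polarising the vanishing imaginary part gives \<open>\<langle>\<i> x, A y\<rangle> = - \<langle>\<i> y, A x\<rangle>\<close>; then substitute \<open>\<i> y\<close> for \<open>y\<close>.\<close>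
  have polar: "inner (\<i> *s x) (A *v y) = - inner (\<i> *s y) (A *v x)" for x y
  proof -
    have "0 = inner (\<i> *s (x + y)) (A *v (x + y))" by (rule im_zero[symmetric])
    also have "\<dots> = inner (\<i> *s x) (A *v x) + inner (\<i> *s x) (A *v y)
        + inner (\<i> *s y) (A *v x) + inner (\<i> *s y) (A *v y)"
      by (simp only: vector_add_ldistrib matrix_vector_right_distrib inner_add_left inner_add_right add.assoc)
    finally show ?thesis using im_zero[of x] im_zero[of y] by simp
  qed
  have "inner (A *v x) y = inner x (A *v y)" for x y
  proof -
    have "inner x (A *v y) = inner (\<i> *s x) (A *v (\<i> *s y))"
      by (simp add: inner_imag_unit_left vector_scalar_commute vector_smult_assoc)
    also have "\<dots> = - inner (\<i> *s (\<i> *s y)) (A *v x)"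
      by (rule polar)
    also have "\<dots> = inner (A *v x) y"
      by (simp add: vector_smult_assoc inner_commute)
    finally show ?thesis ..
  qed
  then show "positive_operator (\<lambda>x. A *v x)"
    using linear_matrix_vector_mult nonneg by (simp add: positive_operator_def self_adjoint_def)
qed

lemma psd_imp_hermitian: "psd A \<Longrightarrow> adj A = A"
  by (simp add: psd_iff_positive_operator positive_operator_def self_adjoint_imp_hermitian)

lemma positive_operator_conj_imag_unit:
  fixes r :: "complex^'n \<Rightarrow> complex^'n"
  assumes "positive_operator r"
  shows "positive_operator (\<lambda>x. - (\<i> *s r (\<i> *s x)))" (is "positive_operator ?s")
proof -
  have lin: "linear r" and sym: "\<And>x y. inner (r x) y = inner x (r y)"
    and nonneg: "\<And>x. 0 \<le> inner x (r x)"
    using assms by (auto simp: positive_operator_def self_adjoint_def)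
  have "linear ?s"
    by (rule linearI) (simp_all add: vector_add_ldistrib linear_add[OF lin] linear_cmul[OF lin]
        vector_smult_scaleR)
  have s_inner: "inner (?s x) y = inner (\<i> *s x) (r (\<i> *s y))" for x y
  proof -
    have "inner (?s x) y = inner (r (\<i> *s x)) (\<i> *s y)" by (simp add: inner_imag_unit_left)
    also have "\<dots> = inner (\<i> *s x) (r (\<i> *s y))" by (rule sym)
    finally show ?thesis .
  qed
  have "inner (?s x) y = inner x (?s y)" for x y
  proof -
    have "inner (?s x) y = inner (r (\<i> *s x)) (\<i> *s y)" by (simp only: s_inner sym)
    also have "\<dots> = inner (?s y) x" by (subst s_inner) (rule inner_commute)
    finally show ?thesis by (simp only: inner_commute)
  qed
  moreover have "0 \<le> inner x (?s x)" for x
  proof -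
    have "inner x (?s x) = inner (\<i> *s x) (r (\<i> *s x))" by (subst inner_commute) (rule s_inner)
    then show ?thesis using nonneg by simp
  qed
  ultimately show ?thesis
    using \<open>linear ?s\<close> by (simp add: positive_operator_def self_adjoint_def)
qed

lemma positive_operator_sqrt_commutes_imag_unit:
  fixes r :: "complex^'n \<Rightarrow> complex^'n"
  assumes r: "positive_operator r" and sq: "\<And>x. r (r (\<i> *s x)) = \<i> *s r (r x)"
  shows "r (\<i> *s x) = \<i> *s r x"
proof -
  have lin: "linear r" using r by (simp add: positive_operator_def self_adjoint_def)
  define s where "s x = - (\<i> *s r (\<i> *s x))" for x
  \<comment> \<open>\<open>s\<close> is another positive square root of \<open>r \<circ> r\<close>, so it is \<open>r\<close> itself.\<close>
  have "s \<circ> s = r \<circ> r"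
  proof
    fix x
    have "s (s x) = - (\<i> *s r (r (\<i> *s x)))"
      by (simp add: s_def vector_smult_assoc linear_neg[OF lin])
    then show "(s \<circ> s) x = (r \<circ> r) x" by (simp add: sq vector_smult_assoc)
  qed
  moreover have "positive_operator s"
    unfolding s_def using r by (rule positive_operator_conj_imag_unit)
  ultimately have "s = r" using positive_operator_sqrt_unique[OF _ r] by blast
  then have "r (\<i> *s x) = s (\<i> *s x)" by simp
  also have "\<dots> = \<i> *s r x" by (simp add: s_def vector_smult_assoc linear_neg[OF lin])
  finally show ?thesis .
qed

lemma complex_linear_if_commutes_imag_unit:
  fixes r :: "complex^'n \<Rightarrow> complex^'m"
  assumes lin: "linear r" and r_imag: "\<And>x. r (\<i> *s x) = \<i> *s r x"
  shows "Vector_Spaces.linear (*s) (*s) r"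
proof -
  have "r (c *s x) = c *s r x" for c x
  proof -
    have "c *s x = Re c *\<^sub>R x + Im c *\<^sub>R (\<i> *s x)"
      by (simp add: vec_eq_iff complex_eq_iff)
    then have "r (c *s x) = Re c *\<^sub>R r x + Im c *\<^sub>R (\<i> *s r x)"
      by (simp add: linear_add[OF lin] linear_cmul[OF lin] r_imag)
    also have "\<dots> = c *s r x" by (simp add: vec_eq_iff complex_eq_iff)
    finally show ?thesis .
  qed
  then show ?thesis
    using linear_add[OF lin] by (simp add: Vector_Spaces.linear_iff vec.vector_space_axioms)
qed

lemma psd_sqrt_exists:
  assumes "psd (P::'d::finite cmat)"
  shows "\<exists>D. psd D \<and> D ** D = P"
proof -
  obtain r where r: "positive_operator r" "r \<circ> r = (\<lambda>x. P *v x)"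
    using positive_operator_sqrt_exists assms psd_iff_positive_operator by blast
  then have rr: "r (r x) = P *v x" for x by (metis comp_apply)
  have "linear r" using r(1) by (simp add: positive_operator_def self_adjoint_def)
  moreover have "r (\<i> *s x) = \<i> *s r x" for x
    using r(1) by (rule positive_operator_sqrt_commutes_imag_unit) (simp add: rr vector_scalar_commute)
  ultimately have D: "matrix r *v x = r x" for x
    by (intro matrix_works complex_linear_if_commutes_imag_unit)
  have "psd (matrix r)"
    using r(1) D by (simp add: psd_iff_positive_operator)
  moreover have "matrix r ** matrix r = P"
    by (simp add: matrix_eq matrix_vector_mul_assoc[symmetric] D rr)
  ultimately show ?thesis by blast
qed

lemma psd_sqrt_unique:
  assumes "psd (D1::'d::finite cmat)" "psd D2" "D1 ** D1 = D2 ** D2"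
  shows "D1 = D2"
proof -
  have "(\<lambda>x. D1 *v x) = (\<lambda>x. D2 *v x)"
  proof (rule positive_operator_sqrt_unique)
    show "positive_operator (\<lambda>x. D1 *v x)" "positive_operator (\<lambda>x. D2 *v x)"
      using assms(1,2) by (simp_all add: psd_iff_positive_operator)
    show "(\<lambda>x. D1 *v x) \<circ> (\<lambda>x. D1 *v x) = (\<lambda>x. D2 *v x) \<circ> (\<lambda>x. D2 *v x)"
      using assms(3) by (simp add: fun_eq_iff matrix_vector_mul_assoc)
  qed
  then show ?thesis by (simp add: matrix_eq fun_eq_iff)
qed

lemma psd_sqrt:
  assumes "psd (P::'d::finite cmat)"
  shows "psd (psd_sqrt P)" and "psd_sqrt P ** psd_sqrt P = P"
proof -
  have "\<exists>!D. psd D \<and> D ** D = P"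
    using psd_sqrt_exists[OF assms] psd_sqrt_unique by metis
  then have "psd (psd_sqrt P) \<and> psd_sqrt P ** psd_sqrt P = P"
    unfolding psd_sqrt_def by (rule theI')
  then show "psd (psd_sqrt P)" "psd_sqrt P ** psd_sqrt P = P" by auto
qed

lemma hermitian_le_scaled_identity:
  assumes "adj (A::'d::finite cmat) = A"
  shows "\<exists>p>0. loewner_le A (p *\<^sub>R mat 1)"
proof -
  obtain K where "K > 0" and K: "\<And>x. norm (A *v x) \<le> K * norm x"
    using linear_bounded_pos[OF linear_matrix_vector_mult[of A]] by blast
  define B where "B = K *\<^sub>R mat 1 - A"
  have B_mult: "B *v x = K *\<^sub>R x - A *v x" for x
    by (simp add: B_def matrix_vector_mult_diff_rdistrib scaleR_matrix_vector_mult)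
  have "0 \<le> inner x (B *v x)" for x
  proof -
    have "inner x (A *v x) \<le> norm x * norm (A *v x)" by (rule norm_cauchy_schwarz)
    also have "\<dots> \<le> norm x * (K * norm x)" using K by (simp add: mult_left_mono)
    finally show ?thesis by (simp add: B_mult inner_diff_right dot_square_norm power2_eq_square mult_ac)
  qed
  moreover have "adj B = B" by (simp add: B_def adj_diff adj_scaleR assms)
  ultimately have "psd B"
    using hermitian_imp_self_adjoint by (simp add: psd_iff_positive_operator positive_operator_def)
  then show ?thesis using \<open>K > 0\<close> by (auto simp: loewner_le_def B_def)
qed

section \<open>Kraus maps\<close>

definition kraus_gram :: "'d::finite cmat list \<Rightarrow> 'd cmat" where
  "kraus_gram Ks = sum_list (map (\<lambda>K. adj K ** K) Ks)"

lemma kraus_Nil [simp]: "kraus [] \<rho> = 0"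
  by (simp add: kraus_def)

lemma kraus_Cons [simp]: "kraus (K # Ks) \<rho> = K ** \<rho> ** adj K + kraus Ks \<rho>"
  by (simp add: kraus_def)

lemma kraus_append: "kraus (Ks @ Ms) \<rho> = kraus Ks \<rho> + kraus Ms \<rho>"
  by (simp add: kraus_def)

lemma kraus_gram_Cons [simp]: "kraus_gram (K # Ks) = adj K ** K + kraus_gram Ks"
  by (simp add: kraus_gram_def)

lemma kraus_gram_append: "kraus_gram (Ks @ Ms) = kraus_gram Ks + kraus_gram Ms"
  by (simp add: kraus_gram_def)

lemma adj_kraus_gram: "adj (kraus_gram Ks) = kraus_gram Ks"
  by (induction Ks) (simp_all add: kraus_gram_def adj_add adj_mult)

lemma kraus_scaleR: "kraus (map (\<lambda>K. c *\<^sub>R K) Ks) \<rho> = (c * c) *\<^sub>R kraus Ks \<rho>"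
  by (induction Ks)
    (simp_all add: adj_scaleR scalar_matrix_assoc matrix_scalar_ac scaleR_add_right)

lemma trace_kraus: "trace (kraus Ks \<rho>) = trace (kraus_gram Ks ** \<rho>)"
proof (induction Ks)
  case Nil
  then show ?case by (simp add: kraus_gram_def trace_def)
next
  case (Cons K Ks)
  have "trace (K ** \<rho> ** adj K) = trace (adj K ** K ** \<rho>)"
    by (simp add: trace_mul_sym[of "K ** \<rho>"] matrix_mul_assoc)
  then show ?case
    using Cons by (simp add: trace_add matrix_add_rdistrib)
qed

lemma completely_positive_sandwich: "completely_positive (\<lambda>\<rho>. K ** \<rho> ** adj K)"
  unfolding completely_positive_def by (rule exI[of _ "[K]"]) simp

lemma completely_positive_add:
  "completely_positive f \<Longrightarrow> completely_positive g \<Longrightarrow> completely_positive (\<lambda>\<rho>. f \<rho> + g \<rho>)"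
  unfolding completely_positive_def by (metis kraus_append)

lemma completely_positive_sum:
  assumes "finite S" "\<And>s. s \<in> S \<Longrightarrow> completely_positive (F s)"
  shows "completely_positive (\<lambda>\<rho>. \<Sum>s\<in>S. F s \<rho>)"
  using assms
proof (induction S rule: finite_induct)
  case empty
  then show ?case unfolding completely_positive_def by (rule_tac x="[]" in exI) simp
next
  case (insert s S)
  then show ?case by (simp add: completely_positive_add)
qed

lemma completely_positive_scaleR:
  assumes "completely_positive f" "c \<ge> 0"
  shows "completely_positive (\<lambda>\<rho>. c *\<^sub>R f \<rho>)"
proof -
  obtain Ks where "\<And>\<rho>. f \<rho> = kraus Ks \<rho>" using assms(1) by (auto simp: completely_positive_def)
  then have "c *\<^sub>R f \<rho> = kraus (map (\<lambda>K. sqrt c *\<^sub>R K) Ks) \<rho>" for \<rho>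
    using assms(2) by (simp add: kraus_scaleR)
  then show ?thesis by (auto simp: completely_positive_def)
qed

lemma CPTP_normalised_kraus:
  assumes "c > 0" "kraus_gram Ks = c *\<^sub>R mat 1"
  shows "CPTP (\<lambda>\<rho>. inverse c *\<^sub>R kraus Ks \<rho>)"
proof -
  have "completely_positive (kraus Ks)" by (auto simp: completely_positive_def)
  then have "completely_positive (\<lambda>\<rho>. inverse c *\<^sub>R kraus Ks \<rho>)"
    using assms(1) by (simp add: completely_positive_scaleR)
  moreover have "trace_preserving (\<lambda>\<rho>. inverse c *\<^sub>R kraus Ks \<rho>)"
    using assms by (simp add: trace_preserving_def trace_kraus trace_scaleR scalar_matrix_assoc[symmetric])
  ultimately show ?thesis by (simp add: CPTP_def)
qed

lemma trace_preserving_kraus_difference_gram: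
  fixes \<Sigma> :: "'d::finite cmat \<Rightarrow> 'd cmat"
  assumes "trace_preserving \<Sigma>" "\<And>\<rho>. \<Sigma> \<rho> = kraus Ks \<rho> - kraus Ms \<rho>"
  shows "kraus_gram Ks = mat 1 + kraus_gram Ms"
proof (rule matrix_eq_by_trace)
  fix \<rho> :: "'d cmat"
  have "trace (kraus Ks \<rho>) = trace (\<Sigma> \<rho>) + trace (kraus Ms \<rho>)"
    by (simp add: assms(2) trace_add[symmetric])
  then show "trace (kraus_gram Ks ** \<rho>) = trace ((mat 1 + kraus_gram Ms) ** \<rho>)"
    using assms(1) by (simp add: trace_preserving_def trace_kraus matrix_add_rdistrib trace_add)
qed

lemma kraus_difference_CPTP_completion:
  fixes \<Sigma> :: "'d::finite cmat \<Rightarrow> 'd cmat" and p :: real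
  assumes "trace_preserving \<Sigma>" "\<And>\<rho>. \<Sigma> \<rho> = kraus Ks \<rho> - kraus Ms \<rho>"
    and "p > 0" "loewner_le (kraus_gram Ms) (p *\<^sub>R mat 1)"
  defines "D \<equiv> psd_sqrt (p *\<^sub>R mat 1 - kraus_gram Ms)"
  shows "CPTP (\<lambda>\<rho>. inverse (1 + p) *\<^sub>R (kraus Ks \<rho> + D ** \<rho> ** adj D))"
    and "CPTP (\<lambda>\<rho>. inverse p *\<^sub>R (kraus Ms \<rho> + D ** \<rho> ** adj D))"
    and "\<Sigma> \<rho> = (1 + p) *\<^sub>R (inverse (1 + p) *\<^sub>R (kraus Ks \<rho> + D ** \<rho> ** adj D))
                - p *\<^sub>R (inverse p *\<^sub>R (kraus Ms \<rho> + D ** \<rho> ** adj D))"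
proof -
  show "\<Sigma> \<rho> = (1 + p) *\<^sub>R (inverse (1 + p) *\<^sub>R (kraus Ks \<rho> + D ** \<rho> ** adj D))
                - p *\<^sub>R (inverse p *\<^sub>R (kraus Ms \<rho> + D ** \<rho> ** adj D))"
    using assms(2,3) by simp
  have "psd (p *\<^sub>R mat 1 - kraus_gram Ms)" using assms(4) by (simp add: loewner_le_def)
  then have "psd D" and "D ** D = p *\<^sub>R mat 1 - kraus_gram Ms"
    unfolding D_def by (rule psd_sqrt)+
  then have "adj D ** D = p *\<^sub>R mat 1 - kraus_gram Ms"
    by (simp add: psd_imp_hermitian)
  then have "kraus_gram (Ks @ [D]) = (1 + p) *\<^sub>R mat 1" and "kraus_gram (Ms @ [D]) = p *\<^sub>R mat 1"
    using trace_preserving_kraus_difference_gram[OF assms(1,2)]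
    by (simp_all add: kraus_gram_append kraus_gram_def scaleR_add_left)
  then show "CPTP (\<lambda>\<rho>. inverse (1 + p) *\<^sub>R (kraus Ks \<rho> + D ** \<rho> ** adj D))"
    and "CPTP (\<lambda>\<rho>. inverse p *\<^sub>R (kraus Ms \<rho> + D ** \<rho> ** adj D))"
    using CPTP_normalised_kraus[of "1 + p" "Ks @ [D]"] CPTP_normalised_kraus[of p "Ms @ [D]"] \<open>p > 0\<close>
    by (simp_all add: kraus_append)
qed

section \<open>Hermiticity-preserving maps\<close>

lemma cmat_linear_sum:
  assumes "cmat_linear f"
  shows "f (sum g S) = (\<Sum>s\<in>S. f (g s))"
proof -
  have "f 0 = 0" using assms unfolding cmat_linear_def by (metis add_cancel_right_right add_0)
  then show ?thesis
    using assms by (induction S rule: infinite_finite_induct) (auto simp: cmat_linear_def)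
qed

lemma cmat_linear_matrix_unit_expansion:
  assumes "cmat_linear \<Sigma>"
  shows "\<Sigma> \<rho> = (\<Sum>j\<in>UNIV. \<Sum>l\<in>UNIV. \<Sum>i\<in>UNIV. \<Sum>k\<in>UNIV.
            cscale (\<Sigma> (matrix_unit j l) $ i $ k) (matrix_unit i j ** \<rho> ** adj (matrix_unit k l)))"
proof -
  have "\<Sigma> \<rho> = (\<Sum>j\<in>UNIV. \<Sum>l\<in>UNIV. cscale (\<rho>$j$l) (\<Sigma> (matrix_unit j l)))"
    using assms by (subst matrix_unit_expansion) (simp add: cmat_linear_sum cmat_linear_def)
  also have "\<dots> = (\<Sum>j\<in>UNIV. \<Sum>l\<in>UNIV. \<Sum>i\<in>UNIV. \<Sum>k\<in>UNIV.
      cscale (\<Sigma> (matrix_unit j l) $ i $ k) (matrix_unit i j ** \<rho> ** adj (matrix_unit k l)))"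
  proof (intro sum.cong refl)
    fix j l
    have "cscale (\<rho>$j$l) (\<Sigma> (matrix_unit j l)) = cscale (\<rho>$j$l)
        (\<Sum>i\<in>UNIV. \<Sum>k\<in>UNIV. cscale (\<Sigma> (matrix_unit j l) $ i $ k) (matrix_unit i k))"
      by (rule arg_cong[OF matrix_unit_expansion])
    also have "\<dots> = (\<Sum>i\<in>UNIV. \<Sum>k\<in>UNIV.
        cscale (\<Sigma> (matrix_unit j l) $ i $ k) (matrix_unit i j ** \<rho> ** adj (matrix_unit k l)))"
      by (simp add: matrix_unit_sandwich vec_eq_iff sum_component sum_distrib_left mult_ac)
    finally show "cscale (\<rho>$j$l) (\<Sigma> (matrix_unit j l)) = \<dots>" .
  qed
  finally show ?thesis .
qed

lemma sandwich_polarisation: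
  "cscale c (B ** \<rho> ** adj A) + cscale (cnj c) (A ** \<rho> ** adj B) =
   (A + cscale c B) ** \<rho> ** adj (A + cscale c B) - A ** \<rho> ** adj A
     - cscale c B ** \<rho> ** adj (cscale c B)"
  by (simp add: adj_add adj_cscale matrix_add_ldistrib matrix_add_rdistrib cscale_mult_left
      cscale_mult_right cscale_cscale cscale_add algebra_simps mult.commute)

lemma hermiticity_preserving_symmetrised_expansion:
  fixes \<Sigma> :: "'d::finite cmat \<Rightarrow> 'd cmat"
  assumes lin: "cmat_linear \<Sigma>" and herm: "hermiticity_preserving \<Sigma>"
  shows "\<Sigma> \<rho> + \<Sigma> \<rho> = (\<Sum>j\<in>UNIV. \<Sum>l\<in>UNIV. \<Sum>i\<in>UNIV. \<Sum>k\<in>UNIV.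
      cscale (\<Sigma> (matrix_unit j l) $ i $ k) (matrix_unit i j ** \<rho> ** adj (matrix_unit k l))
      + cscale (cnj (\<Sigma> (matrix_unit j l) $ i $ k)) (matrix_unit k l ** \<rho> ** adj (matrix_unit i j)))"
proof -
  have "adj (\<Sigma> (adj \<rho>)) = \<Sigma> \<rho>" using herm by (simp add: hermiticity_preserving_def)
  moreover have "adj (\<Sigma> (adj \<rho>)) = (\<Sum>j\<in>UNIV. \<Sum>l\<in>UNIV. \<Sum>i\<in>UNIV. \<Sum>k\<in>UNIV.
      cscale (cnj (\<Sigma> (matrix_unit j l) $ i $ k)) (matrix_unit k l ** \<rho> ** adj (matrix_unit i j)))"
    by (subst cmat_linear_matrix_unit_expansion[OF lin])
      (simp add: adj_sum adj_cscale adj_mult matrix_mul_assoc)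
  moreover note cmat_linear_matrix_unit_expansion[OF lin, of \<rho>]
  ultimately show ?thesis by (simp only: sum.distrib)
qed

lemma hermiticity_preserving_kraus_difference:
  fixes \<Sigma> :: "'d::finite cmat \<Rightarrow> 'd cmat"
  assumes lin: "cmat_linear \<Sigma>" and herm: "hermiticity_preserving \<Sigma>"
  shows "\<exists>Ks Ms. \<forall>\<rho>. \<Sigma> \<rho> = kraus Ks \<rho> - kraus Ms \<rho>"
proof -
  define G where "G j l i k = cscale (\<Sigma> (matrix_unit j l) $ i $ k) (matrix_unit i j)" for j l i k
  define F where "F j l i k = matrix_unit k l + G j l i k" for j l i k
  define Pos where "Pos \<rho> = (\<Sum>j\<in>UNIV. \<Sum>l\<in>UNIV. \<Sum>i\<in>UNIV. \<Sum>k\<in>UNIV.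
      F j l i k ** \<rho> ** adj (F j l i k))" for \<rho>
  define Neg where "Neg \<rho> = (\<Sum>j\<in>UNIV. \<Sum>l\<in>UNIV. \<Sum>i\<in>UNIV. \<Sum>k\<in>UNIV.
      matrix_unit k l ** \<rho> ** adj (matrix_unit k l) + G j l i k ** \<rho> ** adj (G j l i k))" for \<rho>
  have double: "\<Sigma> \<rho> + \<Sigma> \<rho> = Pos \<rho> - Neg \<rho>" for \<rho>
    unfolding hermiticity_preserving_symmetrised_expansion[OF lin herm]
    by (simp add: Pos_def Neg_def F_def G_def sandwich_polarisation sum_subtractf diff_diff_eq)
  have "completely_positive (\<lambda>\<rho>. (1/2::real) *\<^sub>R Pos \<rho>)"
    unfolding Pos_def
    by (intro completely_positive_scaleR completely_positive_sum completely_positive_sandwich) auto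
  then obtain Ks where Ks: "\<And>\<rho>. (1/2::real) *\<^sub>R Pos \<rho> = kraus Ks \<rho>"
    unfolding completely_positive_def by blast
  have "completely_positive (\<lambda>\<rho>. (1/2::real) *\<^sub>R Neg \<rho>)"
    unfolding Neg_def
    by (intro completely_positive_scaleR completely_positive_sum completely_positive_add
        completely_positive_sandwich) auto
  then obtain Ms where Ms: "\<And>\<rho>. (1/2::real) *\<^sub>R Neg \<rho> = kraus Ms \<rho>"
    unfolding completely_positive_def by blast
  have "\<Sigma> \<rho> = kraus Ks \<rho> - kraus Ms \<rho>" for \<rho>
  proof -
    have "\<Sigma> \<rho> = (1/2::real) *\<^sub>R (\<Sigma> \<rho> + \<Sigma> \<rho>)" by (simp add: scaleR_add_right[symmetric])
    also have "\<dots> = kraus Ks \<rho> - kraus Ms \<rho>"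
      by (simp only: double Ks[symmetric] Ms[symmetric] scaleR_diff_right)
    finally show ?thesis .
  qed
  then show ?thesis by blast
qed

theorem mainTheorem1:
  fixes \<Sigma> :: "'d::finite cmat \<Rightarrow> 'd cmat"
  assumes "cmat_linear \<Sigma>" and "trace_preserving \<Sigma>" and "hermiticity_preserving \<Sigma>"
  shows "(\<exists>p::real. p > 0 \<and> (\<exists>Lp Lm. CPTP Lp \<and> CPTP Lm \<and>
            (\<forall>\<rho>. \<Sigma> \<rho> = (1 + p) *\<^sub>R Lp \<rho> - p *\<^sub>R Lm \<rho>)))
    \<and> (\<exists>Ks Ms. \<forall>\<rho>. \<Sigma> \<rho> = kraus Ks \<rho> - kraus Ms \<rho>)
    \<and> (\<forall>Ks Ms (p::real). (\<forall>\<rho>. \<Sigma> \<rho> = kraus Ks \<rho> - kraus Ms \<rho>) \<longrightarrow> p > 0 \<longrightarrow>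
         loewner_le (sum_list (map (\<lambda>M. adj M ** M) Ms)) (p *\<^sub>R mat 1) \<longrightarrow>
         (let D = psd_sqrt (p *\<^sub>R mat 1 - sum_list (map (\<lambda>M. adj M ** M) Ms));
              Lp = (\<lambda>\<rho>. inverse (1 + p) *\<^sub>R (kraus Ks \<rho> + D ** \<rho> ** adj D));
              Lm = (\<lambda>\<rho>. inverse p *\<^sub>R (kraus Ms \<rho> + D ** \<rho> ** adj D))
          in CPTP Lp \<and> CPTP Lm \<and> (\<forall>\<rho>. \<Sigma> \<rho> = (1 + p) *\<^sub>R Lp \<rho> - p *\<^sub>R Lm \<rho>)))"
proof -
  obtain Ks Ms where dec: "\<And>\<rho>. \<Sigma> \<rho> = kraus Ks \<rho> - kraus Ms \<rho>"
    using hermiticity_preserving_kraus_difference[OF assms(1,3)] by blast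
  obtain p :: real where "p > 0" and "loewner_le (kraus_gram Ms) (p *\<^sub>R mat 1)"
    using hermitian_le_scaled_identity[OF adj_kraus_gram] by blast
  note completion = kraus_difference_CPTP_completion[OF assms(2)]
  show ?thesis
    unfolding Let_def kraus_gram_def[symmetric]
    using dec \<open>p > 0\<close> \<open>loewner_le (kraus_gram Ms) (p *\<^sub>R mat 1)\<close> completion by blast
qed

end
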